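(* Let $\Gamma$ be a finite simple graph on $n$ vertices, let $\alpha\models n$, and let $\mu\vdash n$ be the partition obtained by sorting the parts of $\alpha$. Then $\zeta_\alpha(\Gamma)\le c_\mu(\Gamma)$, where $c_\mu(\Gamma)$ is the coefficient of the monomial symmetric function $m_\mu$ in Stanley's chromatic symmetric function $X_\Gamma=\sum_{\mu\vdash n}c_\mu(\Gamma)m_\mu$.
   Context: Stanley's chromatic symmetric function is $X_\Gamma=\sum_\kappa\prod_{v\in V}x_{\kappa(v)}$, summed over all proper colorings $\kappa:V\to\mathbb{N}=\{1,2,\dots\}$ (no edge has both endpoints of the same color); $m_\mu$ is the monomial symmetric function. For a coloring $\lambda:V\to\mathbb{N}$ of $\Gamma$ with values $i_1<\dots<i_k$, let $I_j=\lambda^{-1}(\{i_1,\dots,i_j\})$, $I_0=\emptyset$. It is ordered if for each $j$, no two distinct vertices $u,w$ with $\lambda(u)=\lambda(w)=i_j$ are joined by a path in $\Gamma$ (possibly a single edge) all of whose internal vertices lie in $I_{j-1}$. Its type is $(|\lambda^{-1}(i_1)|,\dots,|\lambda^{-1}(i_k)|)$. For a composition $\alpha$ of $n$ with $k(\alpha)$ parts, $\zeta_\alpha(\Gamma)$ is the number of surjective ordered colorings $\lambda:V\to\{1,\dots,k(\alpha)\}$ of type $\alpha$. *)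

theory Defs
  imports "HOL-Library.FuncSet"
begin

definition simple_graph :: "'a set \<Rightarrow> ('a \<Rightarrow> 'a \<Rightarrow> bool) \<Rightarrow> bool" where
  "simple_graph V E \<longleftrightarrow> finite V \<and> (\<forall>u v. E u v \<longrightarrow> u \<in> V \<and> v \<in> V)
     \<and> (\<forall>u v. E u v \<longrightarrow> E v u) \<and> (\<forall>v. \<not> E v v)"

definition path_through :: "('a \<Rightarrow> 'a \<Rightarrow> bool) \<Rightarrow> 'a set \<Rightarrow> 'a \<Rightarrow> 'a \<Rightarrow> bool" where
  "path_through E S u w \<longleftrightarrow>
     (\<exists>xs. set xs \<subseteq> S \<and> distinct (u # xs @ [w]) \<and> successively E (u # xs @ [w]))"

text \<open>Ordered colorings. For a color c in the image, the set of vertices with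
strictly smaller colors is exactly I_(j-1) when c = i_j.\<close>
definition ordered_coloring :: "'a set \<Rightarrow> ('a \<Rightarrow> 'a \<Rightarrow> bool) \<Rightarrow> ('a \<Rightarrow> nat) \<Rightarrow> bool" where
  "ordered_coloring V E f \<longleftrightarrow>
     (\<forall>c \<in> f ` V. \<forall>u \<in> V. \<forall>w \<in> V.
        f u = c \<and> f w = c \<and> u \<noteq> w \<longrightarrow> \<not> path_through E {v \<in> V. f v < c} u w)"

definition composition :: "nat list \<Rightarrow> nat \<Rightarrow> bool" where
  "composition alpha n \<longleftrightarrow> (\<forall>a \<in> set alpha. 0 < a) \<and> sum_list alpha = n"

definition zeta :: "'a set \<Rightarrow> ('a \<Rightarrow> 'a \<Rightarrow> bool) \<Rightarrow> nat list \<Rightarrow> nat" where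
  "zeta V E alpha = card {f \<in> V \<rightarrow>\<^sub>E {1..length alpha}.
      f ` V = {1..length alpha} \<and> ordered_coloring V E f \<and>
      (\<forall>j \<in> {1..length alpha}. card {v \<in> V. f v = j} = alpha ! (j - 1))}"

definition proper_coloring :: "'a set \<Rightarrow> ('a \<Rightarrow> 'a \<Rightarrow> bool) \<Rightarrow> ('a \<Rightarrow> nat) \<Rightarrow> bool" where
  "proper_coloring V E g \<longleftrightarrow> (\<forall>u \<in> V. \<forall>v \<in> V. E u v \<longrightarrow> g u \<noteq> g v)"

text \<open>Coefficient of m_mu in X_Gamma = coefficient of the monomial
x_1^mu_1 ... x_k^mu_k, i.e. the number of proper colorings V \<rightarrow> N using color i
exactly mu_i times for i = 1..k and no other colors.\<close>
definition chrom_coeff :: "'a set \<Rightarrow> ('a \<Rightarrow> 'a \<Rightarrow> bool) \<Rightarrow> nat list \<Rightarrow> nat" where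
  "chrom_coeff V E mu = card {g \<in> V \<rightarrow>\<^sub>E {1..length mu}.
      proper_coloring V E g \<and>
      (\<forall>j \<in> {1..length mu}. card {v \<in> V. g v = j} = mu ! (j - 1))}"

end

theory Submission
  imports Defs "HOL-Combinatorics.Permutations"
begin

text \<open>
  An ordered coloring is in particular proper: two adjacent
  vertices of the same colour would be joined by a path (the edge itself)
  with no internal vertices. Hence the colorings counted by zeta of type
  alpha are among the proper colorings of type alpha, whose number is the
  coefficient chrom_coeff V E alpha of the monomial with exponent vector alpha.
  This coefficient depends only on the multiset of parts of alpha (the
  chromatic symmetric function is symmetric): renaming the colours by a
  bijection of {1..k} transports proper colorings of one type bijectively to
  proper colorings of the permuted type. Taking the permutation that sorts
  alpha into the partition mu = rev (sort alpha) gives the theorem.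
\<close>

lemma ordered_coloring_imp_proper:
  assumes ordered: "ordered_coloring V E f" and loopless: "\<forall>v. \<not> E v v"
  shows "proper_coloring V E f"
  unfolding proper_coloring_def
proof (intro ballI impI notI)
  fix u v assume u: "u \<in> V" and v: "v \<in> V" and edge: "E u v" and same: "f u = f v"
  have "u \<noteq> v" using edge loopless by metis
  then have "path_through E {w \<in> V. f w < f u} u v"
    unfolding path_through_def using edge by (intro exI[of _ "[]"]) auto
  moreover have "f u \<in> f ` V" using u by blast
  ultimately show False
    using ordered u v same \<open>u \<noteq> v\<close> unfolding ordered_coloring_def by metis
qed

lemma zeta_le_chrom_coeff:
  assumes "finite V" and "\<forall>v. \<not> E v v"
  shows "zeta V E alpha \<le> chrom_coeff V E alpha"
  unfolding zeta_def chrom_coeff_def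
proof (rule card_mono)
  show "finite {g \<in> V \<rightarrow>\<^sub>E {1..length alpha}. proper_coloring V E g \<and>
      (\<forall>j \<in> {1..length alpha}. card {v \<in> V. g v = j} = alpha ! (j - 1))}"
    by (rule finite_subset[of _ "V \<rightarrow>\<^sub>E {1..length alpha}"]) (auto intro: finite_PiE assms(1))
  show "{f \<in> V \<rightarrow>\<^sub>E {1..length alpha}. f ` V = {1..length alpha} \<and> ordered_coloring V E f \<and>
      (\<forall>j \<in> {1..length alpha}. card {v \<in> V. f v = j} = alpha ! (j - 1))}
    \<subseteq> {g \<in> V \<rightarrow>\<^sub>E {1..length alpha}. proper_coloring V E g \<and>
      (\<forall>j \<in> {1..length alpha}. card {v \<in> V. g v = j} = alpha ! (j - 1))}"
  proof (intro Collect_mono impI, elim conjE, intro conjI)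
    fix f assume "ordered_coloring V E f"
    then show "proper_coloring V E f" using assms(2) by (rule ordered_coloring_imp_proper)
  qed
qed

lemma chrom_coeff_relabel_le:
  assumes fin: "finite V"
    and sigma: "bij_betw \<sigma> {1..length alpha} {1..length mu}"
    and sizes: "\<forall>j \<in> {1..length alpha}. mu ! (\<sigma> j - 1) = alpha ! (j - 1)"
  shows "chrom_coeff V E alpha \<le> chrom_coeff V E mu"
proof -
  define A where "A = {f \<in> V \<rightarrow>\<^sub>E {1..length alpha}. proper_coloring V E f \<and>
      (\<forall>j \<in> {1..length alpha}. card {v \<in> V. f v = j} = alpha ! (j - 1))}"
  define B where "B = {g \<in> V \<rightarrow>\<^sub>E {1..length mu}. proper_coloring V E g \<and>
      (\<forall>j \<in> {1..length mu}. card {v \<in> V. g v = j} = mu ! (j - 1))}"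
  define rename where "rename f = restrict (\<sigma> \<circ> f) V" for f :: "'a \<Rightarrow> nat"
  have inj_\<sigma>: "inj_on \<sigma> {1..length alpha}" using sigma by (rule bij_betw_imp_inj_on)
  have "inj_on rename A"
  proof (rule inj_onI)
    fix f1 f2 assume f1: "f1 \<in> A" and f2: "f2 \<in> A" and eq: "rename f1 = rename f2"
    have "f1 v = f2 v" if "v \<in> V" for v
      using fun_cong[OF eq, of v] that f1 f2 inj_\<sigma>
      unfolding rename_def A_def by (auto dest: inj_onD)
    then show "f1 = f2" using f1 f2 unfolding A_def by (auto intro: PiE_ext)
  qed
  moreover have "rename ` A \<subseteq> B"
  proof
    fix g assume "g \<in> rename ` A"
    then obtain f where f: "f \<in> A" and g: "g = rename f" by blast
    have range: "f v \<in> {1..length alpha}" if "v \<in> V" for v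
      using f that unfolding A_def by auto
    have "g \<in> V \<rightarrow>\<^sub>E {1..length mu}"
      using range bij_betwE[OF sigma] unfolding g rename_def by auto
    moreover have "proper_coloring V E g"
      using f range inj_\<sigma> unfolding A_def g rename_def proper_coloring_def
      by (auto dest: inj_onD)
    moreover have "card {v \<in> V. g v = i} = mu ! (i - 1)" if i: "i \<in> {1..length mu}" for i
    proof -
      obtain j where j: "j \<in> {1..length alpha}" and ij: "i = \<sigma> j"
        using i bij_betw_imp_surj_on[OF sigma] by blast
      have "{v \<in> V. g v = i} = {v \<in> V. f v = j}"
        using range j inj_\<sigma> unfolding g rename_def ij by (auto dest: inj_onD)
      then show ?thesis using f j sizes unfolding A_def ij by auto
    qed
    ultimately show "g \<in> B" unfolding B_def by blast
  qed
  moreover have "finite B"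
    unfolding B_def
    by (rule finite_subset[of _ "V \<rightarrow>\<^sub>E {1..length mu}"]) (auto intro: finite_PiE fin)
  ultimately have "card A \<le> card B" by (rule card_inj_on_le)
  then show ?thesis unfolding chrom_coeff_def A_def B_def .
qed

text \<open>A
  permutation p of the positions induces the colour bijection
  c \<mapsto> p (c - 1) + 1.\<close>
lemma chrom_coeff_permute_le:
  assumes fin: "finite V" and p: "p permutes {..<length mu}"
  shows "chrom_coeff V E (permute_list p mu) \<le> chrom_coeff V E mu"
proof (rule chrom_coeff_relabel_le[where \<sigma> = "\<lambda>c. Suc (p (c - 1))"])
  have shift: "bij_betw (\<lambda>c. c - 1) {1..length mu} {..<length mu}"
    by (rule bij_betw_byWitness[where f' = Suc]) auto
  have unshift: "bij_betw Suc {..<length mu} {1..length mu}"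
    by (rule bij_betw_byWitness[where f' = "\<lambda>c. c - 1"]) auto
  have "bij_betw (Suc \<circ> p \<circ> (\<lambda>c. c - 1)) {1..length mu} {1..length mu}"
    using shift permutes_imp_bij[OF p] unshift by (intro bij_betw_trans)
  then show "bij_betw (\<lambda>c. Suc (p (c - 1))) {1..length (permute_list p mu)} {1..length mu}"
    by (simp add: comp_def)
  show "\<forall>j \<in> {1..length (permute_list p mu)}.
      mu ! (Suc (p (j - 1)) - 1) = permute_list p mu ! (j - 1)"
    using p by (auto simp: permute_list_nth)
qed (use fin in simp_all)

lemma chrom_coeff_mset_eq:
  assumes "finite V" and "mset alpha = mset mu"
  shows "chrom_coeff V E alpha = chrom_coeff V E mu"
proof -
  have le: "chrom_coeff V E xs \<le> chrom_coeff V E ys"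
    if "mset xs = mset ys" for xs ys :: "nat list"
  proof -
    obtain p where "p permutes {..<length ys}" and "permute_list p ys = xs"
      using \<open>mset xs = mset ys\<close> by (rule mset_eq_permutation)
    then show ?thesis using chrom_coeff_permute_le[OF assms(1)] by blast
  qed
  show ?thesis using le[OF assms(2)] le[OF assms(2)[symmetric]] by (rule antisym)
qed

theorem mainTheorem14:
  fixes V :: "'a set" and E :: "'a \<Rightarrow> 'a \<Rightarrow> bool" and alpha :: "nat list"
  assumes "simple_graph V E"
    and "composition alpha (card V)"
  shows "zeta V E alpha \<le> chrom_coeff V E (rev (sort alpha))"
proof -
  have fin: "finite V" and loopless: "\<forall>v. \<not> E v v"
    using assms(1) unfolding simple_graph_def by auto
  have "zeta V E alpha \<le> chrom_coeff V E alpha"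
    using fin loopless by (rule zeta_le_chrom_coeff)
  also have "\<dots> = chrom_coeff V E (rev (sort alpha))"
    using fin by (rule chrom_coeff_mset_eq) simp
  finally show ?thesis .
qed

end
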